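(* Let $\mu>0$, $q\in[0,1]$, $s>0$ be fixed and for each $N$ consider the Moran model $(P,X)$ with $N$ individuals described in the context. For each $N$ let $A^{(N)}\subset\bar S^{(N)}$, and let $B^{(N)}$ be an event in $\mathscr{F}_1$ such that $\mathbb{P}^p(B^{(N)})\le\varepsilon(N)$ for all $p\in A^{(N)}$, where $\varepsilon(N)\to0$ as $N\to\infty$. Then there is a constant $C_\mu$ depending only on $\mu$ such that, if $N$ is sufficiently large, for every $p\in A^{(N)}$, \[ \mathbb{E}^p\Big[\inf_{t\in[0,1]}\min_{i=1,\dots,N}\big(X_i(t)-X_i(0)\big)\mathbf{1}_{B^{(N)}}\Big]\ge -C_\mu\big(\sqrt{c_2(p)N^3}+N^2\big)\varepsilon(N)^{1/2}. \] In particular, if $N$ is sufficiently large, for every $p\in A^{(N)}$, \[ \mathbb{E}^p\Big[\inf_{t\in[0,1]}\big(k_c(P(t))-k_c(p)\big)\mathbf{1}_{B^{(N)}}\Big]\ge -C_\mu\big(\sqrt{c_2(p)N^3}+N^2\big)\varepsilon(N)^{1/2}. \] Both statements remain true if $(P,X)$ is replaced by the neutral process $(P^{(Y)},Y)$.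
   Context: Moran model with $N$ individuals. Individual $i$ has fitness type $X_i(t)$. $\bar S^{(N)}$ is the set of probability measures on $\mathbb{R}$ consisting of $N$ point masses of weight $1/N$ all located on a common set $l+\mathbb{Z}$ with $l\in\frac1N\mathbb{Z}$. Dynamics: (Mutation) each individual independently at rate $q\mu$ has its type increased by $1$ and at rate $(1-q)\mu$ decreased by $1$. (Selection) for each ordered pair $(i,j)$, at rate $\frac{s}{N}(X_i-X_j)^+$ individual $i$ replaces individual $j$ ($X_j$ set equal to $X_i$). (Resampling) for each ordered pair $(i,j)$, at rate $\frac1N$ individual $i$ replaces individual $j$. The process is driven by independent Poisson processes/random measures for these events; $\mathscr{F}_1$ is the $\sigma$-algebra generated by the driving noise (equivalently the process) up to time $1$. $P(t)=\frac1N\sum_i\delta_{X_i(t)}$; $\mathbb{P}^p,\mathbb{E}^p$ refer to the process started from a configuration with empirical measure $p$. For $p\in\bar S^{(N)}$: $p_k=p(\{k\})$, $p_{[k,\infty)}=\sum_{j\ge k}p_j$, $m(p)=\sum_k kp_k$, $c_2(p)=\sum_k(k-m(p))^2p_k$, and $k_c(p)=\max\{k:\ Np_{[k,\infty)}>\log^2N\}$. The neutral process $(P^{(Y)},Y)$ is defined by the same mutation and resampling mechanisms (same driving noise) but with no selection; $P^{(Y)}$ is its empirical measure. *)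

theory Defs
  imports "HOL-Probability.Probability" "HOL-Library.Multiset" "HOL-Library.Countable"
begin

text \<open>Labels of the points of the driving Poisson random measure.
  Up i / Down i: mutation of individual i by +1 / -1;
  Res i j: resampling, i replaces j;  Sel i j: selection, i replaces j.
  A point is a triple (label, time, auxiliary coordinate r).\<close>

datatype ev = Up nat | Down nat | Res nat nat | Sel nat nat

instance ev :: countable by countable_datatype

text \<open>For mutation/resampling labels the coordinate r is a dummy
  uniform mark in [0,1]; selection points have intensity (s/N) dt dr on [0,oo)^2 and a
  point (Sel i j, t, r) is effective iff r <= (X_i - X_j)^+, giving the selection rate
  (s/N)(X_i - X_j)^+.\<close>

definition noise_rate :: "nat \<Rightarrow> real \<Rightarrow> real \<Rightarrow> real \<Rightarrow> ev \<Rightarrow> real \<Rightarrow> real \<Rightarrow> real" where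
  "noise_rate N \<mu> q s e t r =
     (if t < 0 then 0 else
      (case e of
         Up i \<Rightarrow> (if i < N then q * \<mu> * indicator {0..1} r else 0)
       | Down i \<Rightarrow> (if i < N then (1 - q) * \<mu> * indicator {0..1} r else 0)
       | Res i j \<Rightarrow> (if i < N \<and> j < N then (1 / real N) * indicator {0..1} r else 0)
       | Sel i j \<Rightarrow> (if i < N \<and> j < N then (s / real N) * indicator {0..} r else 0)))"

definition noise_intensity :: "nat \<Rightarrow> real \<Rightarrow> real \<Rightarrow> real \<Rightarrow> (ev \<times> real \<times> real) measure" where
  "noise_intensity N \<mu> q s =
     density (count_space UNIV \<Otimes>\<^sub>M (lborel \<Otimes>\<^sub>M lborel))
       (\<lambda>(e, t, r). ennreal (noise_rate N \<mu> q s e t r))"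

definition poisson_rm :: "'w measure \<Rightarrow> ('w \<Rightarrow> 'a set) \<Rightarrow> 'a measure \<Rightarrow> bool" where
  "poisson_rm M Pts \<nu> \<longleftrightarrow>
     prob_space M \<and>
     (\<forall>A \<in> sets \<nu>. emeasure \<nu> A < \<infinity> \<longrightarrow>
        (AE \<omega> in M. finite (Pts \<omega> \<inter> A)) \<and>
        (\<lambda>\<omega>. card (Pts \<omega> \<inter> A)) \<in> measurable M (count_space UNIV) \<and>
        (\<forall>k::nat. measure M {\<omega> \<in> space M. card (Pts \<omega> \<inter> A) = k}
                   = measure \<nu> A ^ k / fact k * exp (- measure \<nu> A))) \<and>
     (\<forall>(I :: nat set) F. finite I \<longrightarrow> disjoint_family_on F I \<longrightarrow>
        (\<forall>k\<in>I. F k \<in> sets \<nu> \<and> emeasure \<nu> (F k) < \<infinity>) \<longrightarrow>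
        prob_space.indep_vars M (\<lambda>_. count_space UNIV) (\<lambda>k \<omega>. card (Pts \<omega> \<inter> F k)) I)"

definition noise_F1 :: "'w measure \<Rightarrow> ('w \<Rightarrow> (ev \<times> real \<times> real) set) \<Rightarrow> (ev \<times> real \<times> real) measure \<Rightarrow> 'w set set" where
  "noise_F1 M Pts \<nu> = sigma_sets (space M)
     {{\<omega> \<in> space M. card (Pts \<omega> \<inter> A) = n} | A n.
        A \<in> sets \<nu> \<and> emeasure \<nu> A < \<infinity> \<and> A \<subseteq> {(e, t, r). t \<le> 1}}"

text \<open>Effect of a point (label e, mark r) on a configuration y. The flag sel is True for
  the Moran model with selection and False for the neutral process (selection points
  are ignored).\<close>

definition step :: "bool \<Rightarrow> (nat \<Rightarrow> real) \<Rightarrow> ev \<times> real \<Rightarrow> (nat \<Rightarrow> real)" where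
  "step sel y er =
     (case er of (e, r) \<Rightarrow>
       (case e of
          Up i \<Rightarrow> y(i := y i + 1)
        | Down i \<Rightarrow> y(i := y i - 1)
        | Res i j \<Rightarrow> y(j := y i)
        | Sel i j \<Rightarrow> (if sel \<and> r \<le> max 0 (y i - y j) then y(j := y i) else y)))"

definition is_moran_path :: "bool \<Rightarrow> (ev \<times> real \<times> real) set \<Rightarrow> (nat \<Rightarrow> real) \<Rightarrow> (real \<Rightarrow> nat \<Rightarrow> real) \<Rightarrow> bool" where
  "is_moran_path sel Pts x0 X \<longleftrightarrow>
     (\<forall>t\<le>0. X t = x0) \<and>
     (\<forall>t\<ge>0. \<exists>\<delta>>0. \<forall>u. t \<le> u \<and> u < t + \<delta> \<longrightarrow> X u = X t) \<and>
     (\<forall>t>0. \<exists>\<delta>>0. \<exists>y. (\<forall>u. t - \<delta> < u \<and> u < t \<longrightarrow> X u = y) \<and>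
        X t = (if \<exists>!er. (fst er, t, snd er) \<in> Pts
               then step sel y (THE er. (fst er, t, snd er) \<in> Pts) else y))"

definition moran_path :: "bool \<Rightarrow> (ev \<times> real \<times> real) set \<Rightarrow> (nat \<Rightarrow> real) \<Rightarrow> real \<Rightarrow> nat \<Rightarrow> real" where
  "moran_path sel Pts x0 = (THE X. is_moran_path sel Pts x0 X)"

text \<open>An element of bar S^(N) (N atoms of weight 1/N) is represented by the multiset of
  its atoms, of size N.\<close>

definition emp :: "nat \<Rightarrow> (nat \<Rightarrow> real) \<Rightarrow> real multiset" where
  "emp N x = image_mset x (mset_set {..<N})"

definition Sbar :: "nat \<Rightarrow> real multiset set" where
  "Sbar N = {p. size p = N \<and> (\<exists>l. real N * l \<in> \<int> \<and> (\<forall>k \<in># p. k - l \<in> \<int>))}"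

definition mean :: "real multiset \<Rightarrow> real" where
  "mean p = (\<Sum>\<^sub># p) / real (size p)"

definition c2 :: "real multiset \<Rightarrow> real" where
  "c2 p = (\<Sum>\<^sub># (image_mset (\<lambda>k. (k - mean p)^2) p)) / real (size p)"

text \<open>k_c(p) = max{k in l+Z : N p_[k,oo) > log^2 N}, log = natural logarithm;
  the lattice l+Z is {k. exists x in supp p. k - x in Z}.\<close>

definition kc :: "real multiset \<Rightarrow> real" where
  "kc p = (GREATEST k. (\<exists>x \<in># p. k - x \<in> \<int>) \<and>
             real (size (filter_mset (\<lambda>x. k \<le> x) p)) > (ln (real (size p)))^2)"

end

theory Submission
  imports Defs
begin

text \<open>Only down-mutations lower a type: resampling and selection copy types that are already
  present. Hence up to time 1 every type stays above its initial value minus W, the initial spread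
  of types plus the number D of down-mutation points in [0,1]; the spread is at most
  2 \<surd>(c_2 N^3), and since k_c is monotone under a uniform integer shift on the common lattice,
  k_c obeys the same bound. D is Poisson with mean at most \<mu> N, so E exp(D/N) \<le> exp(2\<mu>), and
  the elementary inequality z \<le> 2 e^z/a + a with an optimal a converts this into
  E[D 1_B] \<le> 2 N \<surd>(2 exp(2\<mu>)) \<surd>P(B). Neither argument uses selection, so it
  covers the neutral process as well.\<close>

section \<open>Pathwise construction of the process\<close>

definition jump :: "bool \<Rightarrow> (ev \<times> real \<times> real) set \<Rightarrow> real \<Rightarrow> (nat \<Rightarrow> real) \<Rightarrow> nat \<Rightarrow> real" where
  "jump sel P t y =
     (if \<exists>!er. (fst er, t, snd er) \<in> P then step sel y (THE er. (fst er, t, snd er) \<in> P) else y)"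

definition fold_path :: "bool \<Rightarrow> (ev \<times> real \<times> real) set \<Rightarrow> real set \<Rightarrow> (nat \<Rightarrow> real) \<Rightarrow> real \<Rightarrow> nat \<Rightarrow> real" where
  "fold_path sel P G x0 t = fold (jump sel P) (sorted_list_of_set (G \<inter> {0<..t})) x0"

lemma sorted_list_of_set_insert_greater:
  fixes S :: "'a::linorder set"
  assumes "finite S" "\<forall>x\<in>S. x < t"
  shows "sorted_list_of_set (insert t S) = sorted_list_of_set S @ [t]"
proof -
  have "t \<notin> S" using assms(2) by blast
  thus ?thesis
    using assms by (simp add: sorted_list_of_set_insert sorted_insort_is_snoc less_imp_le)
qed

lemma is_moran_path_initial: "is_moran_path sel P x0 X \<Longrightarrow> t \<le> 0 \<Longrightarrow> X t = x0"
  unfolding is_moran_path_def by blast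

lemma is_moran_path_right_const:
  "is_moran_path sel P x0 X \<Longrightarrow> 0 \<le> t \<Longrightarrow> \<exists>\<delta>>0. \<forall>u. t \<le> u \<and> u < t + \<delta> \<longrightarrow> X u = X t"
  unfolding is_moran_path_def by blast

lemma is_moran_path_left_limit:
  "is_moran_path sel P x0 X \<Longrightarrow> 0 < t \<Longrightarrow>
     \<exists>\<delta>>0. \<exists>y. (\<forall>u. t - \<delta> < u \<and> u < t \<longrightarrow> X u = y) \<and> X t = jump sel P t y"
  unfolding is_moran_path_def jump_def[symmetric] by blast

lemma is_moran_path_unique:
  assumes X: "is_moran_path sel P x0 X" and Z: "is_moran_path sel P x0 Z"
  shows "X = Z"
proof (rule ccontr)
  assume "X \<noteq> Z"
  define B where "B = {t. X t \<noteq> Z t}"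
  have Bne: "B \<noteq> {}" using \<open>X \<noteq> Z\<close> unfolding B_def by auto
  have Bpos: "t > 0" if "t \<in> B" for t
    using that is_moran_path_initial[OF X, of t] is_moran_path_initial[OF Z, of t]
    unfolding B_def by force
  have bdd: "bdd_below B" using Bpos by (meson bdd_below.I less_imp_le)
  define c where "c = Inf B"
  have low: "c \<le> u" if "u \<in> B" for u unfolding c_def using bdd that by (simp add: cInf_lower)
  have c0: "c \<ge> 0" unfolding c_def using Bne Bpos by (meson cInf_greatest less_imp_le)
  show False
  proof (cases "c \<in> B")
    case True
    hence cpos: "c > 0" using Bpos by auto
    obtain d1 y1 where d1: "d1 > 0" "\<forall>u. c - d1 < u \<and> u < c \<longrightarrow> X u = y1" "X c = jump sel P c y1"
      using is_moran_path_left_limit[OF X cpos] by blast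
    obtain d2 y2 where d2: "d2 > 0" "\<forall>u. c - d2 < u \<and> u < c \<longrightarrow> Z u = y2" "Z c = jump sel P c y2"
      using is_moran_path_left_limit[OF Z cpos] by blast
    define u where "u = c - min d1 d2 / 2"
    have u: "u < c" "c - d1 < u" "c - d2 < u" using d1 d2 unfolding u_def by auto
    hence "u \<notin> B" using low by (meson not_le)
    hence "y1 = y2" using d1 d2 u unfolding B_def by auto
    hence "X c = Z c" using d1 d2 by simp
    thus False using True unfolding B_def by auto
  next
    case False
    obtain d1 where d1: "d1 > 0" "\<forall>u. c \<le> u \<and> u < c + d1 \<longrightarrow> X u = X c"
      using is_moran_path_right_const[OF X c0] by blast
    obtain d2 where d2: "d2 > 0" "\<forall>u. c \<le> u \<and> u < c + d2 \<longrightarrow> Z u = Z c"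
      using is_moran_path_right_const[OF Z c0] by blast
    have "Inf B < c + min d1 d2" using d1 d2 unfolding c_def by simp
    then obtain b where b: "b \<in> B" "b < c + min d1 d2" using Bne bdd by (meson cInf_lessD)
    have "c \<le> b" "b < c + d1" "b < c + d2" using low[OF b(1)] b(2) by auto
    hence "X b = X c" "Z b = Z c" using d1(2) d2(2) by blast+
    moreover have "X c = Z c" using False by (simp add: B_def)
    ultimately show False using b(1) by (simp add: B_def)
  qed
qed

lemma moran_path_eqI: "is_moran_path sel P x0 X \<Longrightarrow> moran_path sel P x0 = X"
  unfolding moran_path_def using is_moran_path_unique by blast

lemma fold_path_right_const:
  assumes fin: "\<And>t. finite (G \<inter> {0<..t})" and "0 \<le> t"
  shows "\<exists>\<delta>>0. \<forall>u. t \<le> u \<and> u < t + \<delta> \<longrightarrow> fold_path sel P G x0 u = fold_path sel P G x0 t"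
proof -
  define S where "S = G \<inter> {t<..t+1}"
  have finS: "finite S" unfolding S_def by (rule finite_subset[OF _ fin[of "t+1"]]) (use assms(2) in auto)
  define d where "d = (if S = {} then 1 else Min S - t)"
  have dpos: "d > 0" unfolding d_def using finS S_def by auto
  have d_le_gap: "d \<le> x - t" if "x \<in> S" for x
  proof -
    have "S \<noteq> {}" using that by auto
    thus ?thesis using Min_le[OF finS that] unfolding d_def by simp
  qed
  have d1: "d \<le> 1"
  proof (cases "S = {}")
    case False
    have "Min S \<in> S" by (rule Min_in[OF finS False])
    hence "Min S \<le> t + 1" unfolding S_def by simp
    thus ?thesis using False unfolding d_def by simp
  qed (simp add: d_def)
  have "fold_path sel P G x0 u = fold_path sel P G x0 t" if u: "t \<le> u" "u < t + d" for u
  proof -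
    have "G \<inter> {0<..u} = G \<inter> {0<..t}"
    proof (intro set_eqI iffI)
      fix x assume x: "x \<in> G \<inter> {0<..u}"
      have "x \<notin> S"
      proof
        assume "x \<in> S"
        hence "d \<le> x - t" by (rule d_le_gap)
        thus False using x u by auto
      qed
      thus "x \<in> G \<inter> {0<..t}" using x u d1 unfolding S_def by auto
    qed (use u in auto)
    thus ?thesis unfolding fold_path_def by simp
  qed
  thus ?thesis using dpos by blast
qed

lemma fold_path_left_limit:
  assumes fin: "\<And>t. finite (G \<inter> {0<..t})" and "0 < t"
    and no_jump: "\<And>t. 0 < t \<Longrightarrow> t \<notin> G \<Longrightarrow>
       jump sel P t (fold (jump sel P) (sorted_list_of_set (G \<inter> {0<..<t})) x0)
         = fold (jump sel P) (sorted_list_of_set (G \<inter> {0<..<t})) x0"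
  shows "\<exists>\<delta>>0. \<exists>y. (\<forall>u. t - \<delta> < u \<and> u < t \<longrightarrow> fold_path sel P G x0 u = y)
                  \<and> fold_path sel P G x0 t = jump sel P t y"
proof -
  define S where "S = G \<inter> {0<..<t}"
  have finS: "finite S" unfolding S_def by (rule finite_subset[OF _ fin[of t]]) auto
  define d where "d = (if S = {} then t else t - Max S)"
  have dpos: "d > 0" unfolding d_def using finS S_def assms(2) by auto
  define y where "y = fold (jump sel P) (sorted_list_of_set S) x0"
  have "fold_path sel P G x0 u = y" if u: "t - d < u" "u < t" for u
  proof -
    have "x \<le> u" if "x \<in> S" for x
      using that finS u unfolding d_def by (auto split: if_splits)
    hence "G \<inter> {0<..u} = S" using u unfolding S_def by auto
    thus ?thesis unfolding fold_path_def y_def by simp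
  qed
  moreover have "fold_path sel P G x0 t = jump sel P t y"
  proof (cases "t \<in> G")
    case True
    have "G \<inter> {0<..t} = insert t S" unfolding S_def using True assms(2) by auto
    thus ?thesis
      using sorted_list_of_set_insert_greater[OF finS] unfolding fold_path_def y_def S_def by auto
  next
    case False
    have "G \<inter> {0<..t} = S" unfolding S_def using False by (auto simp: less_le)
    thus ?thesis unfolding fold_path_def y_def S_def using no_jump[OF assms(2) False] by simp
  qed
  ultimately show ?thesis using dpos by blast
qed

lemma fold_path_is_moran_path:
  assumes "\<And>t. finite (G \<inter> {0<..t})"
    and "\<And>t. 0 < t \<Longrightarrow> t \<notin> G \<Longrightarrow>
       jump sel P t (fold (jump sel P) (sorted_list_of_set (G \<inter> {0<..<t})) x0)
         = fold (jump sel P) (sorted_list_of_set (G \<inter> {0<..<t})) x0"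
  shows "is_moran_path sel P x0 (fold_path sel P G x0)"
proof -
  have "fold_path sel P G x0 t = x0" if "t \<le> 0" for t
  proof -
    have "G \<inter> {0<..t} = {}" using that by auto
    thus ?thesis unfolding fold_path_def by simp
  qed
  thus ?thesis
    unfolding is_moran_path_def jump_def[symmetric]
    using fold_path_right_const[OF assms(1)] fold_path_left_limit[OF assms(1) _ assms(2)]
    by (intro conjI allI impI) simp_all
qed

section \<open>Spread of the types\<close>

definition valid_label :: "nat \<Rightarrow> ev \<Rightarrow> bool" where
  "valid_label N e =
     (case e of Up i \<Rightarrow> i < N | Down i \<Rightarrow> i < N | Res i j \<Rightarrow> i < N \<and> j < N | Sel i j \<Rightarrow> i < N \<and> j < N)"

definition is_up :: "ev \<Rightarrow> bool" where "is_up e = (case e of Up i \<Rightarrow> True | _ \<Rightarrow> False)"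
definition is_down :: "ev \<Rightarrow> bool" where "is_down e = (case e of Down i \<Rightarrow> True | _ \<Rightarrow> False)"
definition is_sel :: "ev \<Rightarrow> bool" where "is_sel e = (case e of Sel i j \<Rightarrow> True | _ \<Rightarrow> False)"

definition min_type :: "nat \<Rightarrow> (nat \<Rightarrow> real) \<Rightarrow> real" where "min_type N y = Min (y ` {..<N})"
definition max_type :: "nat \<Rightarrow> (nat \<Rightarrow> real) \<Rightarrow> real" where "max_type N y = Max (y ` {..<N})"

text \<open>Almost every realisation of the driving noise is admissible.\<close>

definition admissible :: "nat \<Rightarrow> (ev \<times> real \<times> real) set \<Rightarrow> bool" where
  "admissible N P \<longleftrightarrow>
     (\<forall>x\<in>P. valid_label N (fst x) \<and> 0 \<le> fst (snd x) \<and> 0 \<le> snd (snd x)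
             \<and> (\<not> is_sel (fst x) \<longrightarrow> snd (snd x) \<le> 1))
     \<and> (\<forall>T R. finite (P \<inter> {x. fst (snd x) \<le> T \<and> snd (snd x) \<le> R}))"

definition mutations :: "(ev \<times> real \<times> real) set \<Rightarrow> real \<Rightarrow> (ev \<times> real \<times> real) set" where
  "mutations P T = P \<inter> {x. (is_up (fst x) \<or> is_down (fst x)) \<and> fst (snd x) \<le> T}"

definition down_mutations :: "(ev \<times> real \<times> real) set \<Rightarrow> real \<Rightarrow> (ev \<times> real \<times> real) set" where
  "down_mutations P T = P \<inter> {x. is_down (fst x) \<and> fst (snd x) \<le> T}"

lemma min_type_le: "k < N \<Longrightarrow> min_type N y \<le> y k"
  by (auto simp: min_type_def)

lemma max_type_ge: "k < N \<Longrightarrow> y k \<le> max_type N y"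
  by (auto simp: max_type_def)

lemma min_type_ge_iff: "0 < N \<Longrightarrow> m \<le> min_type N y \<longleftrightarrow> (\<forall>k<N. m \<le> y k)"
  unfolding min_type_def by (subst Min_ge_iff) auto

lemma max_type_le_iff: "0 < N \<Longrightarrow> max_type N y \<le> m \<longleftrightarrow> (\<forall>k<N. y k \<le> m)"
  unfolding max_type_def by (subst Max_le_iff) auto

lemma min_type_le_max_type: "0 < N \<Longrightarrow> min_type N y \<le> max_type N y"
  using min_type_le max_type_ge by (meson order_trans)

lemma step_min_type_ge:
  assumes "valid_label N e" "0 < N"
  shows "min_type N y - (if is_down e then 1 else 0) \<le> min_type N (step sel y (e, r))"
  unfolding min_type_ge_iff[OF assms(2)]
proof (intro allI impI)
  fix k assume "k < N"
  thus "min_type N y - (if is_down e then 1 else 0) \<le> step sel y (e, r) k"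
    using assms(1) min_type_le[OF \<open>k < N\<close>, of y]
    by (cases e) (auto simp: step_def valid_label_def is_down_def intro: min_type_le)
qed

lemma step_max_type_le:
  assumes "valid_label N e" "0 < N"
  shows "max_type N (step sel y (e, r)) \<le> max_type N y + (if is_up e then 1 else 0)"
  unfolding max_type_le_iff[OF assms(2)]
proof (intro allI impI)
  fix k assume "k < N"
  thus "step sel y (e, r) k \<le> max_type N y + (if is_up e then 1 else 0)"
    using assms(1) max_type_ge[OF \<open>k < N\<close>, of y]
    by (cases e) (auto simp: step_def valid_label_def is_up_def intro: max_type_ge)
qed

lemma step_lattice:
  assumes "valid_label N e" "\<forall>i<N. y i - l \<in> \<int>"
  shows "\<forall>i<N. step sel y (e, r) i - l \<in> \<int>"
proof (intro allI impI)
  fix k assume k: "k < N"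
  have shifted: "y k + 1 - l \<in> \<int>" "y k - 1 - l \<in> \<int>" if "k < N" for k
    using assms(2) that Ints_add[of "y k - l" 1] Ints_diff[of "y k - l" 1]
    by (auto simp: algebra_simps)
  show "step sel y (e, r) k - l \<in> \<int>"
    using assms k shifted by (cases e) (auto simp: step_def valid_label_def)
qed

lemma jump_at_unique_point:
  assumes "\<exists>!er. (fst er, t, snd er) \<in> P"
  obtains e r where "(e, t, r) \<in> P" "jump sel P t y = step sel y (e, r)"
    "\<And>x. x \<in> P \<Longrightarrow> fst (snd x) = t \<Longrightarrow> x = (e, t, r)"
proof -
  obtain er where er: "(fst er, t, snd er) \<in> P"
    and uniq: "\<And>er'. (fst er', t, snd er') \<in> P \<Longrightarrow> er' = er"
    using assms by (elim ex1E) blast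
  have "(THE er. (fst er, t, snd er) \<in> P) = er" using er uniq by (rule the_equality)
  hence jump: "jump sel P t y = step sel y (fst er, snd er)" unfolding jump_def using assms by simp
  have at_t: "x = (fst er, t, snd er)" if "x \<in> P" "fst (snd x) = t" for x
  proof -
    obtain a b c where x: "x = (a, b, c)" by (cases x)
    have "(fst (a, c), t, snd (a, c)) \<in> P" using that x by simp
    hence "(a, c) = er" by (rule uniq)
    thus ?thesis using x that by auto
  qed
  show ?thesis by (rule that[OF er jump at_t])
qed

lemma jump_min_type_ge:
  assumes V: "\<forall>x\<in>P. valid_label N (fst x)" and N: "0 < N"
  shows "min_type N y - card (P \<inter> {x. is_down (fst x) \<and> fst (snd x) = t}) \<le> min_type N (jump sel P t y)"
proof (cases "\<exists>!er. (fst er, t, snd er) \<in> P")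
  case True
  obtain e r where er: "(e, t, r) \<in> P" "jump sel P t y = step sel y (e, r)"
    "\<And>x. x \<in> P \<Longrightarrow> fst (snd x) = t \<Longrightarrow> x = (e, t, r)"
    using jump_at_unique_point[OF True, where sel = sel and y = y] by blast
  have "valid_label N e" using V er(1) by force
  hence step: "min_type N y - (if is_down e then 1 else 0) \<le> min_type N (jump sel P t y)"
    using step_min_type_ge[OF _ N, of e y sel r] er(2) by simp
  show ?thesis
  proof (cases "is_down e")
    case True
    have "P \<inter> {x. is_down (fst x) \<and> fst (snd x) = t} = {(e, t, r)}"
    proof
      show "P \<inter> {x. is_down (fst x) \<and> fst (snd x) = t} \<subseteq> {(e, t, r)}" using er(3) by blast
    qed (use er(1) True in simp)
    thus ?thesis using step True by simp
  qed (use step in simp)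
qed (simp add: jump_def)

lemma jump_max_type_le:
  assumes V: "\<forall>x\<in>P. valid_label N (fst x)" and N: "0 < N"
  shows "max_type N (jump sel P t y) \<le> max_type N y + card (P \<inter> {x. is_up (fst x) \<and> fst (snd x) = t})"
proof (cases "\<exists>!er. (fst er, t, snd er) \<in> P")
  case True
  obtain e r where er: "(e, t, r) \<in> P" "jump sel P t y = step sel y (e, r)"
    "\<And>x. x \<in> P \<Longrightarrow> fst (snd x) = t \<Longrightarrow> x = (e, t, r)"
    using jump_at_unique_point[OF True, where sel = sel and y = y] by blast
  have "valid_label N e" using V er(1) by force
  hence step: "max_type N (jump sel P t y) \<le> max_type N y + (if is_up e then 1 else 0)"
    using step_max_type_le[OF _ N, of e sel y r] er(2) by simp
  show ?thesis
  proof (cases "is_up e")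
    case True
    have "P \<inter> {x. is_up (fst x) \<and> fst (snd x) = t} = {(e, t, r)}"
    proof
      show "P \<inter> {x. is_up (fst x) \<and> fst (snd x) = t} \<subseteq> {(e, t, r)}" using er(3) by blast
    qed (use er(1) True in simp)
    thus ?thesis using step True by simp
  qed (use step in simp)
qed (simp add: jump_def)

lemma jump_lattice:
  assumes "\<forall>x\<in>P. valid_label N (fst x)" "\<forall>i<N. y i - l \<in> \<int>"
  shows "\<forall>i<N. jump sel P t y i - l \<in> \<int>"
proof (cases "\<exists>!er. (fst er, t, snd er) \<in> P")
  case True
  obtain e r where "(e, t, r) \<in> P" "jump sel P t y = step sel y (e, r)"
    using jump_at_unique_point[OF True, where sel = sel and y = y] by blast
  thus ?thesis using step_lattice[OF _ assms(2)] assms(1) by force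
qed (use assms(2) in \<open>simp add: jump_def\<close>)

lemma fold_jump_lattice:
  assumes "\<forall>x\<in>P. valid_label N (fst x)" "\<forall>i<N. y i - l \<in> \<int>"
  shows "\<forall>i<N. fold (jump sel P) L y i - l \<in> \<int>"
  using assms(2) by (induction L arbitrary: y) (simp_all add: jump_lattice[OF assms(1)])

lemma fold_jump_min_type_ge:
  assumes "\<forall>x\<in>P. valid_label N (fst x)" "0 < N" "distinct L"
    and "finite (P \<inter> {x. is_down (fst x) \<and> fst (snd x) \<in> set L})"
  shows "min_type N y - card (P \<inter> {x. is_down (fst x) \<and> fst (snd x) \<in> set L})
           \<le> min_type N (fold (jump sel P) L y)"
  using assms(3,4)
proof (induction L rule: rev_induct)
  case (snoc t L)
  let ?A = "P \<inter> {x. is_down (fst x) \<and> fst (snd x) \<in> set L}"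
  let ?B = "P \<inter> {x. is_down (fst x) \<and> fst (snd x) = t}"
  have split: "P \<inter> {x. is_down (fst x) \<and> fst (snd x) \<in> set (L @ [t])} = ?A \<union> ?B" by auto
  have fin: "finite ?A" "finite ?B" using snoc.prems(2) unfolding split by auto
  have "?A \<inter> ?B = {}" using snoc.prems(1) by auto
  hence "card (?A \<union> ?B) = card ?A + card ?B" using card_Un_disjoint[OF fin] by blast
  thus ?case
    using snoc fin jump_min_type_ge[OF assms(1,2), of "fold (jump sel P) L y" t sel]
    unfolding split by simp
qed simp

lemma fold_jump_max_type_le:
  assumes "\<forall>x\<in>P. valid_label N (fst x)" "0 < N" "distinct L"
    and "finite (P \<inter> {x. is_up (fst x) \<and> fst (snd x) \<in> set L})"
  shows "max_type N (fold (jump sel P) L y)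
           \<le> max_type N y + card (P \<inter> {x. is_up (fst x) \<and> fst (snd x) \<in> set L})"
  using assms(3,4)
proof (induction L rule: rev_induct)
  case (snoc t L)
  let ?A = "P \<inter> {x. is_up (fst x) \<and> fst (snd x) \<in> set L}"
  let ?B = "P \<inter> {x. is_up (fst x) \<and> fst (snd x) = t}"
  have split: "P \<inter> {x. is_up (fst x) \<and> fst (snd x) \<in> set (L @ [t])} = ?A \<union> ?B" by auto
  have fin: "finite ?A" "finite ?B" using snoc.prems(2) unfolding split by auto
  have "?A \<inter> ?B = {}" using snoc.prems(1) by auto
  hence "card (?A \<union> ?B) = card ?A + card ?B" using card_Un_disjoint[OF fin] by blast
  thus ?case
    using snoc fin jump_max_type_le[OF assms(1,2), of sel t "fold (jump sel P) L y"]
    unfolding split by simp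
qed simp

lemma admissible_valid_labels: "admissible N P \<Longrightarrow> \<forall>x\<in>P. valid_label N (fst x)"
  unfolding admissible_def by blast

lemma admissible_finite_box:
  "admissible N P \<Longrightarrow> finite (P \<inter> {x. fst (snd x) \<le> T \<and> snd (snd x) \<le> R})"
  unfolding admissible_def by blast

lemma finite_mutations:
  assumes "admissible N P"
  shows "finite (mutations P T)"
proof (rule finite_subset[OF _ admissible_finite_box[OF assms, of T 1]])
  have "\<not> is_sel e" if "is_up e \<or> is_down e" for e
    using that by (cases e) (auto simp: is_up_def is_down_def is_sel_def)
  thus "mutations P T \<subseteq> P \<inter> {x. fst (snd x) \<le> T \<and> snd (snd x) \<le> 1}"
    using assms unfolding mutations_def admissible_def by auto
qed

lemma fold_jump_spread:
  assumes P: "admissible N P" and "0 < N" "distinct L" "\<forall>\<tau>\<in>set L. \<tau> \<le> T"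
  shows "max_type N (fold (jump sel P) L y) - min_type N (fold (jump sel P) L y)
           \<le> max_type N y - min_type N y + card (mutations P T)"
proof -
  let ?A = "P \<inter> {x. is_down (fst x) \<and> fst (snd x) \<in> set L}"
  let ?B = "P \<inter> {x. is_up (fst x) \<and> fst (snd x) \<in> set L}"
  have sub: "?A \<union> ?B \<subseteq> mutations P T" using assms(4) unfolding mutations_def by auto
  have fin: "finite ?A" "finite ?B" using finite_subset[OF sub finite_mutations[OF P]] by auto
  have "\<not> (is_up e \<and> is_down e)" for e by (cases e) (auto simp: is_up_def is_down_def)
  hence "?A \<inter> ?B = {}" by blast
  hence "card ?A + card ?B \<le> card (mutations P T)"
    using card_mono[OF finite_mutations[OF P] sub] card_Un_disjoint[OF fin] by simp
  thus ?thesis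
    using fold_jump_min_type_ge[OF admissible_valid_labels[OF P] assms(2,3) fin(1), of y sel]
      fold_jump_max_type_le[OF admissible_valid_labels[OF P] assms(2,3) fin(2), of sel y]
    by linarith
qed

lemma jump_ineffective:
  assumes P: "admissible N P"
    and big: "\<forall>x\<in>P. fst (snd x) = t \<longrightarrow> 1 < snd (snd x) \<and> max_type N y - min_type N y < snd (snd x)"
  shows "jump sel P t y = y"
proof (cases "\<exists>!er. (fst er, t, snd er) \<in> P")
  case True
  obtain e r where er: "(e, t, r) \<in> P" "jump sel P t y = step sel y (e, r)"
    using jump_at_unique_point[OF True, where sel = sel and y = y] by blast
  have r: "1 < r" "max_type N y - min_type N y < r" using big er(1) by force+
  have "valid_label N e" "\<not> is_sel e \<longrightarrow> r \<le> 1" using P er(1) unfolding admissible_def by auto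
  then obtain i j where e: "e = Sel i j" "i < N" "j < N"
    using r by (cases e) (auto simp: is_sel_def valid_label_def)
  have "y i - y j \<le> max_type N y - min_type N y" using max_type_ge[OF e(2), of y] min_type_le[OF e(3), of y] by simp
  hence "step sel y (e, r) = y" using r unfolding e(1) step_def by auto
  thus ?thesis using er(2) by simp
qed (simp add: jump_def)

text \<open>Each mutation widens the spread of types by at most one, so up to time T the spread is below
  R T; a selection point whose mark exceeds the current spread never fires. Hence G, the set of
  times of points with mark at most R \<lceil>t\<rceil>, is locally finite and contains every effective
  jump.\<close>

lemma moran_path_eq_fold_path:
  assumes N: "0 < N" and P: "admissible N P"
  shows "\<exists>G. (\<forall>t. finite (G \<inter> {0<..t})) \<and> moran_path sel P x0 = fold_path sel P G x0"
proof -
  define R where "R T = max_type N x0 - min_type N x0 + card (mutations P T) + 1" for T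
  have R1: "1 \<le> R T" for T using min_type_le_max_type[OF N, of x0] unfolding R_def by simp
  have R_mono: "R T \<le> R T'" if "T \<le> T'" for T T'
  proof -
    have "mutations P T \<subseteq> mutations P T'" using that unfolding mutations_def by auto
    thus ?thesis using card_mono[OF finite_mutations[OF P]] unfolding R_def by simp
  qed
  define G where "G = {t. 0 < t \<and> (\<exists>x\<in>P. fst (snd x) = t \<and> snd (snd x) \<le> R (of_int \<lceil>t\<rceil>))}"
  have finG: "finite (G \<inter> {0<..t})" for t
  proof -
    have "R (of_int \<lceil>\<tau>\<rceil>) \<le> R (of_int \<lceil>t\<rceil>)" if "\<tau> \<le> t" for \<tau>
      using that by (intro R_mono) (simp add: ceiling_mono)
    hence "G \<inter> {0<..t} \<subseteq> (\<lambda>x. fst (snd x)) ` (P \<inter> {x. fst (snd x) \<le> t \<and> snd (snd x) \<le> R (of_int \<lceil>t\<rceil>)})"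
      unfolding G_def by fastforce
    thus ?thesis using admissible_finite_box[OF P] finite_subset by blast
  qed
  have "jump sel P t (fold (jump sel P) (sorted_list_of_set (G \<inter> {0<..<t})) x0)
          = fold (jump sel P) (sorted_list_of_set (G \<inter> {0<..<t})) x0" if t: "0 < t" "t \<notin> G" for t
  proof (rule jump_ineffective[OF P])
    let ?y = "fold (jump sel P) (sorted_list_of_set (G \<inter> {0<..<t})) x0"
    have "finite (G \<inter> {0<..<t})" by (rule finite_subset[OF _ finG[of t]]) auto
    hence "max_type N ?y - min_type N ?y \<le> max_type N x0 - min_type N x0 + card (mutations P (of_int \<lceil>t\<rceil>))"
      by (intro fold_jump_spread[OF P N]) (auto intro: order_trans[OF _ le_of_int_ceiling])
    hence "max_type N ?y - min_type N ?y < R (of_int \<lceil>t\<rceil>)" unfolding R_def by simp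
    thus "\<forall>x\<in>P. fst (snd x) = t \<longrightarrow> 1 < snd (snd x) \<and> max_type N ?y - min_type N ?y < snd (snd x)"
      using t R1[of "of_int \<lceil>t\<rceil>"] unfolding G_def by force
  qed
  hence "moran_path sel P x0 = fold_path sel P G x0"
    by (intro moran_path_eqI fold_path_is_moran_path finG)
  thus ?thesis using finG by blast
qed

lemma moran_path_ge:
  assumes N: "0 < N" and P: "admissible N P" and "t \<le> T" "i < N"
  shows "x0 i - (max_type N x0 - min_type N x0 + card (down_mutations P T)) \<le> moran_path sel P x0 t i"
proof -
  obtain G where finG: "\<forall>t. finite (G \<inter> {0<..t})" and X: "moran_path sel P x0 = fold_path sel P G x0"
    using moran_path_eq_fold_path[OF N P] by blast
  let ?L = "sorted_list_of_set (G \<inter> {0<..t})"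
  let ?A = "P \<inter> {x. is_down (fst x) \<and> fst (snd x) \<in> set ?L}"
  have sub: "?A \<subseteq> down_mutations P T" using assms(3) finG unfolding down_mutations_def by auto
  have fin: "finite (down_mutations P T)"
    using finite_mutations[OF P, of T] unfolding mutations_def down_mutations_def
    by (rule finite_subset[rotated]) auto
  have "min_type N x0 - card ?A \<le> min_type N (fold (jump sel P) ?L x0)"
    by (rule fold_jump_min_type_ge[OF admissible_valid_labels[OF P] N])
       (use finite_subset[OF sub fin] in auto)
  moreover have "card ?A \<le> card (down_mutations P T)" by (rule card_mono[OF fin sub])
  ultimately show ?thesis
    using min_type_le[OF assms(4), of "fold (jump sel P) ?L x0"] max_type_ge[OF assms(4), of x0]
    unfolding X fold_path_def by linarith
qed

lemma moran_path_lattice: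
  assumes "0 < N" "admissible N P" "\<forall>i<N. x0 i - l \<in> \<int>" "i < N"
  shows "moran_path sel P x0 t i - l \<in> \<int>"
proof -
  obtain G where "moran_path sel P x0 = fold_path sel P G x0"
    using moran_path_eq_fold_path[OF assms(1,2)] by blast
  thus ?thesis
    using fold_jump_lattice[OF admissible_valid_labels[OF assms(2)] assms(3)] assms(4)
    unfolding fold_path_def by simp
qed

section \<open>Empirical measures and the level k_c\<close>

lemma size_emp [simp]: "size (emp N y) = N"
  by (simp add: emp_def)

lemma mem_emp: "x \<in># emp N y \<longleftrightarrow> (\<exists>i<N. x = y i)"
  by (auto simp: emp_def in_image_mset)

lemma size_filter_emp: "size (filter_mset Q (emp N y)) = card {i\<in>{..<N}. Q (y i)}"
  by (simp add: emp_def filter_mset_image_mset)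

lemma sum_mset_emp: "sum_mset (image_mset f (emp N y)) = (\<Sum>i<N. f (y i))"
  by (simp add: emp_def sum_unfold_sum_mset image_mset.compositionality comp_def)

definition kc_candidates :: "real multiset \<Rightarrow> real set" where
  "kc_candidates p =
     {k. (\<exists>x \<in># p. k - x \<in> \<int>) \<and> real (size (filter_mset (\<lambda>x. k \<le> x) p)) > (ln (real (size p)))^2}"

lemma kc_eq_Greatest: "kc p = (GREATEST k. k \<in> kc_candidates p)"
  unfolding kc_def kc_candidates_def by simp

lemma finite_lattice_interval: "finite {k::real. k - l \<in> \<int> \<and> a \<le> k \<and> k \<le> b}"
proof (rule finite_subset)
  show "{k::real. k - l \<in> \<int> \<and> a \<le> k \<and> k \<le> b} \<subseteq> (\<lambda>z. l + of_int z) ` {\<lceil>a - l\<rceil>..\<lfloor>b - l\<rfloor>}"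
  proof
    fix k assume k: "k \<in> {k::real. k - l \<in> \<int> \<and> a \<le> k \<and> k \<le> b}"
    then obtain z where z: "k - l = of_int z" by (auto elim: Ints_cases)
    have "z \<in> {\<lceil>a - l\<rceil>..\<lfloor>b - l\<rfloor>}" using k z by (auto simp: ceiling_le_iff le_floor_iff)
    moreover have "k = l + of_int z" using z by simp
    ultimately show "k \<in> (\<lambda>z. l + of_int z) ` {\<lceil>a - l\<rceil>..\<lfloor>b - l\<rfloor>}" by blast
  qed
qed simp

text \<open>On a lattice the candidates for k_c are bounded above by the largest type, so a single
  candidate guarantees that the greatest one exists.\<close>

lemma kc_is_greatest:
  assumes N: "0 < N" and lat: "\<forall>i<N. y i - l \<in> \<int>" and k0: "k0 \<in> kc_candidates (emp N y)"
  shows "kc (emp N y) \<in> kc_candidates (emp N y) \<and> (\<forall>k\<in>kc_candidates (emp N y). k \<le> kc (emp N y))"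
proof -
  let ?S = "kc_candidates (emp N y)"
  have bounded: "k - l \<in> \<int> \<and> k \<le> max_type N y" if k: "k \<in> ?S" for k
  proof -
    obtain x where x: "x \<in># emp N y" "k - x \<in> \<int>" using k unfolding kc_candidates_def by auto
    obtain i where i: "i < N" "x = y i" using x(1) mem_emp by blast
    have "k - l = (k - x) + (y i - l)" using i by simp
    hence "k - l \<in> \<int>" using x(2) lat i by (metis Ints_add)
    moreover have "card {i\<in>{..<N}. k \<le> y i} > 0"
      using k unfolding kc_candidates_def size_filter_emp size_emp
      by (metis (no_types, lifting) mem_Collect_eq not_gr0 of_nat_0 zero_le_power2 not_less)
    then obtain j where "j < N" "k \<le> y j"
      by (metis (no_types, lifting) card_gt_0_iff empty_Collect_eq lessThan_iff mem_Collect_eq)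
    hence "k \<le> max_type N y" using max_type_ge by (meson order_trans)
    ultimately show ?thesis by simp
  qed
  define F where "F = ?S \<inter> {k0..}"
  have finF: "finite F"
    by (rule finite_subset[OF _ finite_lattice_interval[of l k0 "max_type N y"]])
       (auto simp: F_def dest: bounded)
  have k0F: "k0 \<in> F" using k0 unfolding F_def by simp
  have "Max F \<in> F" using finF k0F by (intro Max_in) auto
  moreover have "k \<le> Max F" if "k \<in> ?S" for k
  proof (cases "k0 \<le> k")
    case True
    thus ?thesis using that finF unfolding F_def by simp
  qed (use Max_ge[OF finF k0F] in simp)
  moreover have "kc (emp N y) = Max F" unfolding kc_eq_Greatest
    by (rule Greatest_equality) (use calculation F_def in auto)
  ultimately show ?thesis unfolding F_def by simp
qed

lemma ln_squared_less:
  fixes x :: real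
  assumes "256 \<le> x"
  shows "(ln x)^2 < x"
proof -
  have x1: "1 \<le> x" using assms by simp
  have "ln x = 4 * ln (sqrt (sqrt x))" using x1 by (simp add: ln_sqrt)
  also have "ln (sqrt (sqrt x)) < sqrt (sqrt x)"
    using x1 ln_le_minus_one[of "sqrt (sqrt x)"] by simp
  finally have "ln x < 4 * sqrt (sqrt x)" by simp
  hence "(ln x)^2 < (4 * sqrt (sqrt x))^2" using x1 by (intro power_strict_mono) auto
  also have "\<dots> = 16 * sqrt x" using x1 by (simp add: power_mult_distrib)
  also have "16 * sqrt x \<le> sqrt x * sqrt x"
    using assms real_sqrt_le_mono[of 256 x] by (intro mult_right_mono) auto
  also have "sqrt x * sqrt x = x" using x1 by simp
  finally show ?thesis .
qed

text \<open>The hypothesis on ln N makes the lowest type a candidate, so that k_c is not a junk value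
  of GREATEST.\<close>

lemma kc_shift_le:
  assumes N: "0 < N" and L: "(ln (real N))^2 < real N"
    and latx: "\<forall>i<N. x i - l \<in> \<int>" and laty: "\<forall>i<N. y i - l \<in> \<int>"
    and W: "W \<in> \<int>" and shift: "\<forall>i<N. x i - W \<le> y i"
  shows "kc (emp N x) - W \<le> kc (emp N y)"
proof -
  have "min_type N x \<in> x ` {..<N}" unfolding min_type_def using N by (intro Min_in) auto
  then obtain j where j: "j < N" "min_type N x = x j" by auto
  have "{i\<in>{..<N}. min_type N x \<le> x i} = {..<N}" using min_type_le by auto
  hence "real (size (filter_mset (\<lambda>z. min_type N x \<le> z) (emp N x))) = real N"
    unfolding size_filter_emp by simp
  moreover have "x j \<in># emp N x" using j mem_emp by blast
  ultimately have "min_type N x \<in> kc_candidates (emp N x)"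
    unfolding kc_candidates_def size_emp using L j by force
  hence kx: "kc (emp N x) \<in> kc_candidates (emp N x)" using kc_is_greatest[OF N latx] by blast
  let ?k = "kc (emp N x)"
  obtain z where z: "z \<in># emp N x" "?k - z \<in> \<int>" using kx unfolding kc_candidates_def by auto
  obtain a where a: "a < N" "z = x a" using z(1) mem_emp by blast
  have "?k - W - y 0 = (?k - z) + (x a - l) - (y 0 - l) - W" using a by simp
  hence lattice: "?k - W - y 0 \<in> \<int>" using z(2) latx laty a N W by (metis Ints_add Ints_diff)
  have y0: "y 0 \<in># emp N y" using N mem_emp by blast
  have "{i\<in>{..<N}. ?k \<le> x i} \<subseteq> {i\<in>{..<N}. ?k - W \<le> y i}" using shift by force
  hence "card {i\<in>{..<N}. ?k \<le> x i} \<le> card {i\<in>{..<N}. ?k - W \<le> y i}" by (intro card_mono) auto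
  moreover have "real (card {i\<in>{..<N}. ?k \<le> x i}) > (ln (real N))^2"
    using kx unfolding kc_candidates_def size_filter_emp size_emp by simp
  ultimately have "real (card {i\<in>{..<N}. ?k - W \<le> y i}) > (ln (real N))^2" by linarith
  hence "?k - W \<in> kc_candidates (emp N y)"
    unfolding kc_candidates_def size_filter_emp size_emp using lattice y0 by blast
  thus ?thesis using kc_is_greatest[OF N laty] by blast
qed

lemma spread_Ints:
  assumes "0 < N" "\<forall>i<N. x i - l \<in> \<int>"
  shows "max_type N x - min_type N x \<in> \<int>"
proof -
  have "max_type N x \<in> x ` {..<N}" "min_type N x \<in> x ` {..<N}"
    unfolding max_type_def min_type_def using assms(1) by (auto intro!: Max_in Min_in)
  then obtain a b where "a < N" "b < N" "max_type N x = x a" "min_type N x = x b" by auto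
  moreover have "x a - x b = (x a - l) - (x b - l)" by simp
  ultimately show ?thesis using assms(2) by (metis Ints_diff)
qed

lemma inf_displacement_ge:
  assumes N: "256 \<le> N" and P: "admissible N P" and lat: "\<forall>i<N. x0 i - l \<in> \<int>"
    and W: "W = max_type N x0 - min_type N x0 + card (down_mutations P 1)"
  shows "- W \<le> (INF t\<in>{0..1}. Min ((\<lambda>i. moran_path sel P x0 t i - x0 i) ` {..<N}))"
    and "- W \<le> (INF t\<in>{0..1}. kc (emp N (moran_path sel P x0 t)) - kc (emp N x0))"
proof -
  have N0: "0 < N" using N by simp
  have ge: "x0 i - W \<le> moran_path sel P x0 t i" if "t \<in> {0..1}" "i < N" for t i
    using moran_path_ge[OF N0 P _ that(2)] that(1) unfolding W by simp
  show "- W \<le> (INF t\<in>{0..1}. Min ((\<lambda>i. moran_path sel P x0 t i - x0 i) ` {..<N}))"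
  proof (rule cINF_greatest)
    fix t :: real assume t: "t \<in> {0..1}"
    have "- W \<le> moran_path sel P x0 t i - x0 i" if "i < N" for i using ge[OF t that] by simp
    thus "- W \<le> Min ((\<lambda>i. moran_path sel P x0 t i - x0 i) ` {..<N})"
      using N0 by (subst Min_ge_iff) auto
  qed simp
  have "W \<in> \<int>" unfolding W using spread_Ints[OF N0 lat] by (intro Ints_add) auto
  moreover have "(ln (real N))^2 < real N" using ln_squared_less[of "real N"] N by simp
  ultimately have kc_ge: "kc (emp N x0) - W \<le> kc (emp N (moran_path sel P x0 t))" if "t \<in> {0..1}" for t
    using ge[OF that] moran_path_lattice[OF N0 P lat] kc_shift_le[OF N0 _ lat] by force
  show "- W \<le> (INF t\<in>{0..1}. kc (emp N (moran_path sel P x0 t)) - kc (emp N x0))"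
  proof (rule cINF_greatest)
    fix t :: real assume "t \<in> {0..1}"
    thus "- W \<le> kc (emp N (moran_path sel P x0 t)) - kc (emp N x0)" using kc_ge by force
  qed simp
qed

lemma spread_le_c2:
  assumes N: "0 < N"
  shows "max_type N x - min_type N x \<le> 2 * sqrt (c2 (emp N x) * real N ^ 3)"
proof -
  let ?m = "mean (emp N x)"
  have Nc2: "real N * c2 (emp N x) = (\<Sum>i<N. (x i - ?m)^2)"
    unfolding c2_def sum_mset_emp using N by simp
  have dev: "\<bar>x j - ?m\<bar> \<le> sqrt (real N * c2 (emp N x))" if "j < N" for j
  proof -
    have "(x j - ?m)^2 \<le> (\<Sum>i<N. (x i - ?m)^2)" using that by (intro member_le_sum) auto
    hence "sqrt ((x j - ?m)^2) \<le> sqrt (real N * c2 (emp N x))" unfolding Nc2 by (rule real_sqrt_le_mono)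
    thus ?thesis by simp
  qed
  have "max_type N x \<in> x ` {..<N}" "min_type N x \<in> x ` {..<N}"
    unfolding max_type_def min_type_def using N by (auto intro!: Max_in Min_in)
  then obtain a b where ab: "a < N" "b < N" "max_type N x = x a" "min_type N x = x b" by auto
  have "max_type N x - min_type N x \<le> \<bar>x a - ?m\<bar> + \<bar>x b - ?m\<bar>" using ab by simp
  also have "\<dots> \<le> 2 * sqrt (real N * c2 (emp N x))" using dev[OF ab(1)] dev[OF ab(2)] by simp
  also have "sqrt (real N * c2 (emp N x)) \<le> sqrt (c2 (emp N x) * real N ^ 3)"
  proof -
    have "0 \<le> c2 (emp N x)" unfolding c2_def sum_mset_emp by (simp add: sum_nonneg)
    hence "real N * c2 (emp N x) \<le> real N ^ 3 * c2 (emp N x)"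
      by (rule mult_right_mono[rotated]) (use power_increasing[of 1 3 "real N"] N in simp)
    thus ?thesis by (simp add: mult.commute)
  qed
  finally show ?thesis by simp
qed

section \<open>The intensity of the driving noise\<close>

abbreviation noise_base :: "(ev \<times> real \<times> real) measure" where
  "noise_base \<equiv> count_space UNIV \<Otimes>\<^sub>M (lborel \<Otimes>\<^sub>M lborel)"

abbreviation rate_at :: "nat \<Rightarrow> real \<Rightarrow> real \<Rightarrow> real \<Rightarrow> ev \<times> real \<times> real \<Rightarrow> real" where
  "rate_at N \<mu> q s x \<equiv> noise_rate N \<mu> q s (fst x) (fst (snd x)) (snd (snd x))"

definition down_box :: "nat \<Rightarrow> (ev \<times> real \<times> real) set" where
  "down_box N = Down ` {..<N} \<times> ({0..1} \<times> {0..1})"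

lemma rate_at_measurable: "rate_at N \<mu> q s \<in> borel_measurable noise_base"
proof -
  have "(\<lambda>y. noise_rate N \<mu> q s e (fst y) (snd y)) \<in> borel_measurable (lborel \<Otimes>\<^sub>M lborel)" for e
  proof (cases e)
    case (Up i) show ?thesis unfolding noise_rate_def Up by (simp only: ev.case) measurable
  next
    case (Down i) show ?thesis unfolding noise_rate_def Down by (simp only: ev.case) measurable
  next
    case (Res i j) show ?thesis unfolding noise_rate_def Res by (simp only: ev.case) measurable
  next
    case (Sel i j) show ?thesis unfolding noise_rate_def Sel by (simp only: ev.case) measurable
  qed
  thus ?thesis by (intro measurable_pair_measure_countable1) auto
qed

lemma noise_intensity_eq_density: "noise_intensity N \<mu> q s = density noise_base (\<lambda>x. ennreal (rate_at N \<mu> q s x))"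
  unfolding noise_intensity_def by (rule arg_cong[where f = "density noise_base"]) (auto simp: fun_eq_iff)

lemma sets_noise_intensity [simp]: "sets (noise_intensity N \<mu> q s) = sets noise_base"
  unfolding noise_intensity_eq_density by simp

lemma emeasure_noise_intensity:
  "A \<in> sets noise_base \<Longrightarrow>
     emeasure (noise_intensity N \<mu> q s) A = (\<integral>\<^sup>+x. ennreal (rate_at N \<mu> q s x) * indicator A x \<partial>noise_base)"
  unfolding noise_intensity_eq_density by (rule emeasure_density) (use rate_at_measurable in auto)

lemma noise_rate_le:
  assumes "0 \<le> q" "q \<le> 1" "0 < \<mu>" "0 < s" "0 < N"
  shows "noise_rate N \<mu> q s e t r \<le> \<mu> + 1 + s"
proof -
  have "1 / real N \<le> 1" "s / real N \<le> s" "q * \<mu> \<le> \<mu>" "(1 - q) * \<mu> \<le> \<mu>"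
    using assms by (auto simp: field_simps intro: mult_left_le_one_le)
  hence "1 / real N \<le> \<mu> + 1 + s" "s / real N \<le> \<mu> + 1 + s" "q * \<mu> \<le> \<mu> + 1 + s"
    "(1 - q) * \<mu> \<le> \<mu> + 1 + s"
    using assms by linarith+
  thus ?thesis unfolding noise_rate_def using assms by (cases e) (auto simp: indicator_def)
qed

lemma noise_rate_nonzero:
  "noise_rate N \<mu> q s e t r \<noteq> 0 \<Longrightarrow>
     valid_label N e \<and> 0 \<le> t \<and> 0 \<le> r \<and> (\<not> is_sel e \<longrightarrow> r \<le> 1)"
  by (cases e) (auto simp: noise_rate_def valid_label_def is_sel_def indicator_def split: if_splits)

lemma box_in_sets_noise_base: "E \<times> ({a..b} \<times> {c..d}) \<in> sets noise_base"
  by (intro pair_measureI) auto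

lemma emeasure_noise_base_box:
  assumes "finite E" "a \<le> b" "c \<le> d"
  shows "emeasure noise_base (E \<times> ({a..b} \<times> {c..d})) = of_nat (card E) * ennreal (b - a) * ennreal (d - c)"
proof -
  have "sigma_finite_measure (lborel \<Otimes>\<^sub>M lborel :: (real \<times> real) measure)"
    by (intro sigma_finite_pair_measure sigma_finite_lborel)
  hence "emeasure noise_base (E \<times> ({a..b} \<times> {c..d})) =
           emeasure (count_space UNIV) E * emeasure (lborel \<Otimes>\<^sub>M lborel) ({a..b} \<times> {c..d})"
    by (intro sigma_finite_measure.emeasure_pair_measure_Times) auto
  moreover have "emeasure (lborel \<Otimes>\<^sub>M lborel) ({a..b} \<times> {c..d}) = ennreal (b - a) * ennreal (d - c)"
    using sigma_finite_measure.emeasure_pair_measure_Times[OF sigma_finite_lborel, of "{a..b}" lborel "{c..d}"]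
      assms by simp
  ultimately show ?thesis using assms by (simp add: mult.assoc)
qed

lemma noise_intensity_box_finite:
  assumes "0 \<le> q" "q \<le> 1" "0 < \<mu>" "0 < s" "0 < N" "finite E" "a \<le> b" "c \<le> d"
  shows "emeasure (noise_intensity N \<mu> q s) (E \<times> ({a..b} \<times> {c..d})) < \<infinity>"
proof -
  have "emeasure (noise_intensity N \<mu> q s) (E \<times> ({a..b} \<times> {c..d}))
     \<le> (\<integral>\<^sup>+x. ennreal (\<mu> + 1 + s) * indicator (E \<times> ({a..b} \<times> {c..d})) x \<partial>noise_base)"
    unfolding emeasure_noise_intensity[OF box_in_sets_noise_base]
    by (intro nn_integral_mono) (auto simp: indicator_def intro!: ennreal_leI noise_rate_le[OF assms(1-5)])
  also have "\<dots> = ennreal (\<mu> + 1 + s) * (of_nat (card E) * ennreal (b - a) * ennreal (d - c))"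
    by (subst nn_integral_cmult_indicator[OF box_in_sets_noise_base]) (simp add: emeasure_noise_base_box assms)
  also have "\<dots> < \<infinity>"
    by (simp add: ennreal_mult_less_top ennreal_of_nat_eq_real_of_nat flip: ennreal_mult)
  finally show ?thesis .
qed

lemma noise_intensity_down_box_le:
  assumes "0 \<le> q" "q \<le> 1" "0 < \<mu>" "0 < s" "0 < N"
  shows "emeasure (noise_intensity N \<mu> q s) (down_box N) \<le> ennreal (\<mu> * real N)"
proof -
  have "ennreal (rate_at N \<mu> q s x) * indicator (down_box N) x \<le> ennreal \<mu> * indicator (down_box N) x" for x
  proof (cases "x \<in> down_box N")
    case True
    then obtain i t r where "x = (Down i, t, r)" "i < N" "0 \<le> t" "r \<in> {0..1}" by (auto simp: down_box_def)
    hence "rate_at N \<mu> q s x \<le> \<mu>" using assms by (simp add: noise_rate_def mult_left_le_one_le)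
    thus ?thesis using True by (simp add: ennreal_leI)
  qed simp
  hence "emeasure (noise_intensity N \<mu> q s) (down_box N) \<le> (\<integral>\<^sup>+x. ennreal \<mu> * indicator (down_box N) x \<partial>noise_base)"
    unfolding down_box_def emeasure_noise_intensity[OF box_in_sets_noise_base] by (intro nn_integral_mono) simp
  also have "\<dots> = ennreal \<mu> * (of_nat N * ennreal 1 * ennreal 1)"
    unfolding down_box_def
    by (subst nn_integral_cmult_indicator[OF box_in_sets_noise_base])
       (simp add: emeasure_noise_base_box card_image inj_on_def)
  also have "\<dots> = ennreal (\<mu> * real N)"
    using assms by (simp add: ennreal_mult ennreal_of_nat_eq_real_of_nat)
  finally show ?thesis .
qed

lemma noise_intensity_null_set:
  "{x. rate_at N \<mu> q s x = 0} \<in> sets (noise_intensity N \<mu> q s)"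
  "emeasure (noise_intensity N \<mu> q s) {x. rate_at N \<mu> q s x = 0} = 0"
proof -
  have "{x. rate_at N \<mu> q s x = 0} = rate_at N \<mu> q s -` {0} \<inter> space noise_base"
    by (auto simp: space_pair_measure)
  thus sets: "{x. rate_at N \<mu> q s x = 0} \<in> sets (noise_intensity N \<mu> q s)"
    using measurable_sets[OF rate_at_measurable, of "{0}"] by simp
  show "emeasure (noise_intensity N \<mu> q s) {x. rate_at N \<mu> q s x = 0} = 0"
    using sets unfolding sets_noise_intensity emeasure_noise_intensity[OF sets[simplified]]
    by (intro nn_integral_zero') (auto simp: indicator_def)
qed

lemma finite_valid_labels: "finite {e. valid_label N e}"
proof (rule finite_subset)
  show "{e. valid_label N e} \<subseteq> Up ` {..<N} \<union> Down ` {..<N} \<union> case_prod Res ` ({..<N} \<times> {..<N})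
                                \<union> case_prod Sel ` ({..<N} \<times> {..<N})"
  proof
    fix e assume "e \<in> {e. valid_label N e}"
    thus "e \<in> Up ` {..<N} \<union> Down ` {..<N} \<union> case_prod Res ` ({..<N} \<times> {..<N})
                \<union> case_prod Sel ` ({..<N} \<times> {..<N})"
      by (cases e) (auto simp: valid_label_def)
  qed
qed simp

section \<open>Poisson random measures\<close>

lemma poisson_rm_AE_disjoint:
  assumes P: "poisson_rm M Pts \<nu>" and A: "A \<in> sets \<nu>" "emeasure \<nu> A = 0"
  shows "AE \<omega> in M. Pts \<omega> \<inter> A = {}"
proof -
  interpret prob_space M using P unfolding poisson_rm_def by blast
  have fin: "AE \<omega> in M. finite (Pts \<omega> \<inter> A)"
    and "prob {\<omega> \<in> space M. card (Pts \<omega> \<inter> A) = 0} = measure \<nu> A ^ 0 / fact 0 * exp (- measure \<nu> A)"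
    using P A unfolding poisson_rm_def by auto
  moreover have "measure \<nu> A = 0" using A(2) by (simp add: measure_def)
  ultimately have "AE \<omega> in M. \<omega> \<in> {\<omega> \<in> space M. card (Pts \<omega> \<inter> A) = 0}"
    by (intro AE_prob_1) simp
  thus ?thesis using fin by eventually_elim auto
qed

lemma poisson_rm_AE_finite:
  "poisson_rm M Pts \<nu> \<Longrightarrow> A \<in> sets \<nu> \<Longrightarrow> emeasure \<nu> A < \<infinity> \<Longrightarrow> AE \<omega> in M. finite (Pts \<omega> \<inter> A)"
  unfolding poisson_rm_def by auto

lemma poisson_rm_card_measurable:
  "poisson_rm M Pts \<nu> \<Longrightarrow> A \<in> sets \<nu> \<Longrightarrow> emeasure \<nu> A < \<infinity> \<Longrightarrow>
     (\<lambda>\<omega>. card (Pts \<omega> \<inter> A)) \<in> measurable M (count_space UNIV)"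
  unfolding poisson_rm_def by auto

lemma noise_F1_subset_sets:
  assumes "poisson_rm M Pts \<nu>"
  shows "noise_F1 M Pts \<nu> \<subseteq> sets M"
  unfolding noise_F1_def
proof (rule sets.sigma_sets_subset, safe)
  fix A :: "(ev \<times> real \<times> real) set" and n :: nat
  assume "A \<in> sets \<nu>" "emeasure \<nu> A < \<infinity>"
  hence "(\<lambda>\<omega>. card (Pts \<omega> \<inter> A)) -` {n} \<inter> space M \<in> sets M"
    using measurable_sets[OF poisson_rm_card_measurable[OF assms]] by simp
  moreover have "(\<lambda>\<omega>. card (Pts \<omega> \<inter> A)) -` {n} \<inter> space M = {\<omega> \<in> space M. card (Pts \<omega> \<inter> A) = n}"
    by auto
  ultimately show "{\<omega> \<in> space M. card (Pts \<omega> \<inter> A) = n} \<in> sets M" by simp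
qed

lemma nn_integral_nat_valued:
  fixes f :: "nat \<Rightarrow> ennreal"
  assumes D: "D \<in> measurable M (count_space UNIV)"
  shows "(\<integral>\<^sup>+\<omega>. f (D \<omega>) \<partial>M) = (\<Sum>k. f k * emeasure M {\<omega> \<in> space M. D \<omega> = k})"
proof -
  define A where "A k = {\<omega> \<in> space M. D \<omega> = k}" for k
  have A: "A k \<in> sets M" for k
  proof -
    have "D -` {k} \<inter> space M \<in> sets M" by (rule measurable_sets[OF D]) simp
    moreover have "D -` {k} \<inter> space M = A k" unfolding A_def by auto
    ultimately show ?thesis by simp
  qed
  have "f (D \<omega>) = (\<Sum>k. f k * indicator (A k) \<omega>)" if "\<omega> \<in> space M" for \<omega>
  proof -
    have "(\<Sum>k. f k * indicator (A k) \<omega>) = (\<Sum>k\<in>{D \<omega>}. f k * indicator (A k) \<omega>)"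
      by (rule suminf_finite) (auto simp: A_def)
    thus ?thesis using that by (simp add: A_def)
  qed
  hence "(\<integral>\<^sup>+\<omega>. f (D \<omega>) \<partial>M) = (\<integral>\<^sup>+\<omega>. (\<Sum>k. f k * indicator (A k) \<omega>) \<partial>M)"
    by (intro nn_integral_cong) simp
  also have "\<dots> = (\<Sum>k. \<integral>\<^sup>+\<omega>. f k * indicator (A k) \<omega> \<partial>M)"
    by (rule nn_integral_suminf) (use A in auto)
  also have "\<dots> = (\<Sum>k. f k * emeasure M (A k))"
    by (simp add: nn_integral_cmult_indicator A)
  finally show ?thesis unfolding A_def .
qed

lemma poisson_rm_exp_moment:
  assumes P: "poisson_rm M Pts \<nu>" and A: "A \<in> sets \<nu>" "emeasure \<nu> A < \<infinity>"
  shows "(\<integral>\<^sup>+\<omega>. ennreal (exp (c * real (card (Pts \<omega> \<inter> A)))) \<partial>M)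
           = ennreal (exp (measure \<nu> A * (exp c - 1)))"
proof -
  interpret prob_space M using P unfolding poisson_rm_def by blast
  define l where "l = measure \<nu> A"
  have dist: "measure M {\<omega> \<in> space M. card (Pts \<omega> \<inter> A) = k} = l ^ k / fact k * exp (- l)" for k
    using P A unfolding poisson_rm_def l_def by auto
  have "(\<integral>\<^sup>+\<omega>. ennreal (exp (c * real (card (Pts \<omega> \<inter> A)))) \<partial>M)
      = (\<Sum>k. ennreal (exp (c * real k)) * emeasure M {\<omega> \<in> space M. card (Pts \<omega> \<inter> A) = k})"
    by (rule nn_integral_nat_valued[OF poisson_rm_card_measurable[OF P A]])
  also have "\<dots> = (\<Sum>k. ennreal (exp (- l) * ((l * exp c) ^ k / fact k)))"
  proof (rule suminf_cong)
    fix k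
    have "exp (c * real k) * l ^ k = (l * exp c) ^ k"
      by (simp add: power_mult_distrib exp_of_nat_mult[symmetric] mult.commute)
    hence rearranged: "exp (c * real k) * (l ^ k / fact k * exp (- l)) = exp (- l) * ((l * exp c) ^ k / fact k)"
      by (simp add: field_simps)
    have "emeasure M {\<omega> \<in> space M. card (Pts \<omega> \<inter> A) = k} = ennreal (l ^ k / fact k * exp (- l))"
      using dist[of k] by (simp add: emeasure_eq_measure)
    moreover have "ennreal (exp (c * real k)) * ennreal (l ^ k / fact k * exp (- l))
        = ennreal (exp (c * real k) * (l ^ k / fact k * exp (- l)))"
      by (rule ennreal_mult[symmetric]) (simp_all add: l_def)
    ultimately have "ennreal (exp (c * real k)) * emeasure M {\<omega> \<in> space M. card (Pts \<omega> \<inter> A) = k}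
        = ennreal (exp (c * real k) * (l ^ k / fact k * exp (- l)))"
      by simp
    thus "ennreal (exp (c * real k)) * emeasure M {\<omega> \<in> space M. card (Pts \<omega> \<inter> A) = k}
        = ennreal (exp (- l) * ((l * exp c) ^ k / fact k))"
      unfolding rearranged .
  qed
  also have "\<dots> = ennreal (exp (- l) * exp (l * exp c))"
  proof -
    have "(\<lambda>k. exp (- l) * ((l * exp c) ^ k / fact k)) sums (exp (- l) * exp (l * exp c))"
      using sums_mult[OF exp_converges[of "l * exp c"], of "exp (- l)"] by (simp add: divide_inverse mult.commute)
    thus ?thesis by (subst suminf_ennreal2) (auto simp: sums_iff l_def)
  qed
  also have "exp (- l) * exp (l * exp c) = exp (l * (exp c - 1))"
    by (simp add: exp_add[symmetric] algebra_simps)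
  finally show ?thesis unfolding l_def .
qed

section \<open>Bounds from an exponential moment\<close>

lemma le_two_exp_div_plus:
  fixes z a :: real
  assumes "0 \<le> z" "0 < a"
  shows "z \<le> 2 * exp z / a + a"
proof (cases "z \<le> a")
  case True
  thus ?thesis using assms by (simp add: add_increasing)
next
  case False
  have "z\<^sup>2 \<le> 2 * exp z" using exp_lower_Taylor_quadratic[OF assms(1)] assms(1) by simp
  moreover have "z * a \<le> z\<^sup>2" using False assms by (simp add: power2_eq_square mult_left_mono)
  ultimately have "z \<le> 2 * exp z / a" using assms by (simp add: field_simps)
  thus ?thesis using assms by linarith
qed

lemma exp_inverse_minus_one_le:
  assumes "2 \<le> N"
  shows "exp (1 / real N) - 1 \<le> 2 / real N"
proof -
  define x where "x = 1 / real N"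
  have x: "0 \<le> x" "x \<le> 1/2" unfolding x_def using assms by (auto simp: field_simps)
  have "(1 - x) * exp x \<le> exp (- x) * exp x"
    using exp_ge_add_one_self[of "-x"] by (simp add: mult_right_mono)
  hence le1: "(1 - x) * exp x \<le> 1" by (simp add: exp_minus field_simps)
  moreover have "1/2 * exp x \<le> (1 - x) * exp x" using x by (intro mult_right_mono) auto
  ultimately have "exp x \<le> 2" by linarith
  hence "x * exp x \<le> x * 2" using x by (intro mult_left_mono) auto
  moreover have "exp x - 1 \<le> x * exp x" using le1 by (simp add: algebra_simps)
  ultimately show ?thesis unfolding x_def by simp
qed

lemma ennreal_count_indicator_le:
  fixes a c :: real and k :: nat
  assumes a: "0 < a" and "0 < N" "0 \<le> c"
  shows "ennreal ((c + real k) * indicator B \<omega>)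
           \<le> ennreal (2 * real N / a) * ennreal (exp (real k / real N)) + ennreal (c + real N * a) * indicator B \<omega>"
proof -
  have "real k / real N \<le> 2 * exp (real k / real N) / a + a"
    by (rule le_two_exp_div_plus) (use a in auto)
  hence "real k \<le> 2 * real N / a * exp (real k / real N) + real N * a"
    using assms(2) by (simp add: field_simps)
  moreover have nonneg: "0 \<le> 2 * real N / a * exp (real k / real N)" using a by simp
  ultimately have "ennreal ((c + real k) * indicator B \<omega>)
      \<le> ennreal (2 * real N / a * exp (real k / real N) + (c + real N * a) * indicator B \<omega>)"
    by (intro ennreal_leI) (cases "\<omega> \<in> B"; simp)
  also have "\<dots> = ennreal (2 * real N / a * exp (real k / real N))
                   + ennreal (indicator B \<omega> * (c + real N * a))"
    using a assms(3) nonneg by (subst ennreal_plus) (auto simp: mult.commute)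
  also have "\<dots> = ennreal (2 * real N / a) * ennreal (exp (real k / real N))
                   + ennreal (c + real N * a) * indicator B \<omega>"
  proof -
    have "ennreal (2 * real N / a * exp (real k / real N))
        = ennreal (2 * real N / a) * ennreal (exp (real k / real N))"
      by (rule ennreal_mult) (use a in auto)
    moreover have "ennreal (indicator B \<omega> * (c + real N * a)) = ennreal (c + real N * a) * indicator B \<omega>"
      by (simp add: indicator_mult_ennreal[symmetric] mult.commute)
    ultimately show ?thesis by (simp only:)
  qed
  finally show ?thesis .
qed

text \<open>Splitting z \<le> 2 e^z / a + a with the optimal a = \<surd>(2K/e) turns the exponential moment
  into a \<surd>P(B) bound.\<close>

lemma nn_integral_indicator_le_exp_moment:
  fixes D :: "'w \<Rightarrow> nat"
  assumes "prob_space M" and B: "B \<in> sets M" "measure M B \<le> e"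
    and D: "D \<in> measurable M (count_space UNIV)"
    and moment: "(\<integral>\<^sup>+\<omega>. ennreal (exp (real (D \<omega>) / real N)) \<partial>M) \<le> ennreal K"
    and "0 < N" "0 \<le> c" "0 < K"
  shows "(\<integral>\<^sup>+\<omega>. ennreal ((c + real (D \<omega>)) * indicator B \<omega>) \<partial>M)
           \<le> ennreal (c * e + 2 * real N * sqrt (2 * K) * sqrt e)"
proof -
  interpret prob_space M by fact
  have e: "0 \<le> e" using B(2) measure_nonneg[of M B] by linarith
  show ?thesis
  proof (cases "e = 0")
    case True
    hence "prob B = 0" using B(2) measure_nonneg[of M B] by linarith
    hence "AE \<omega> in M. \<omega> \<notin> B"
      using B(1) by (intro AE_not_in null_setsI) (simp_all add: emeasure_eq_measure)
    hence "(\<integral>\<^sup>+\<omega>. ennreal ((c + real (D \<omega>)) * indicator B \<omega>) \<partial>M) = (\<integral>\<^sup>+\<omega>. 0 \<partial>M)"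
      by (intro nn_integral_cong_AE) (auto elim!: eventually_mono)
    thus ?thesis by simp
  next
    case False
    hence e_pos: "0 < e" using e by simp
    define a where "a = sqrt (2 * K) / sqrt e"
    have a: "0 < a" unfolding a_def using assms(8) e_pos by simp
    note pointwise = ennreal_count_indicator_le[OF a assms(6,7), of "D \<omega>" B \<omega> for \<omega>]
    have "(\<integral>\<^sup>+\<omega>. ennreal ((c + real (D \<omega>)) * indicator B \<omega>) \<partial>M)
        \<le> ennreal (2 * real N / a) * (\<integral>\<^sup>+\<omega>. ennreal (exp (real (D \<omega>) / real N)) \<partial>M)
           + ennreal (c + real N * a) * emeasure M B"
      using B(1) measurable_compose[OF D, of "\<lambda>k. real k" borel]
      by (subst nn_integral_cmult_indicator[symmetric, OF B(1)], subst nn_integral_cmult[symmetric])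
         (auto simp: nn_integral_add[symmetric] intro!: nn_integral_mono pointwise)
    also have "\<dots> \<le> ennreal (2 * real N / a) * ennreal K + ennreal (c + real N * a) * ennreal e"
      using moment B(2) by (intro add_mono mult_left_mono) (auto simp: emeasure_eq_measure intro: ennreal_leI)
    also have "\<dots> = ennreal (2 * real N / a * K + (c + real N * a) * e)"
    proof -
      have "ennreal (2 * real N / a * K) = ennreal (2 * real N / a) * ennreal K"
        "ennreal ((c + real N * a) * e) = ennreal (c + real N * a) * ennreal e"
        using a assms(7,8) e by (intro ennreal_mult; simp)+
      moreover have "ennreal (2 * real N / a * K + (c + real N * a) * e)
          = ennreal (2 * real N / a * K) + ennreal ((c + real N * a) * e)"
        using a assms(7,8) e by (intro ennreal_plus) simp_all
      ultimately show ?thesis by simp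
    qed
    also have "2 * real N / a * K + (c + real N * a) * e = c * e + 2 * real N * sqrt (2 * K) * sqrt e"
    proof -
      have "sqrt (2 * K) * sqrt (2 * K) = 2 * K" "sqrt e * sqrt e = e" using assms(8) e by simp_all
      thus ?thesis unfolding a_def using assms(8) e_pos by (simp add: field_simps)
    qed
    finally show ?thesis .
  qed
qed

section \<open>The displacement bound\<close>

lemma AE_admissible:
  assumes "0 \<le> q" "q \<le> 1" "0 < \<mu>" "0 < s" "0 < N"
    and P: "poisson_rm M Pts (noise_intensity N \<mu> q s)"
  shows "AE \<omega> in M. admissible N (Pts \<omega>)"
proof -
  define Box where "Box T R = {e. valid_label N e} \<times> ({0..real T} \<times> {0..real R})" for T R :: nat
  have "AE \<omega> in M. Pts \<omega> \<inter> {x. rate_at N \<mu> q s x = 0} = {}"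
    by (rule poisson_rm_AE_disjoint[OF P noise_intensity_null_set])
  moreover have "AE \<omega> in M. \<forall>T R. finite (Pts \<omega> \<inter> Box T R)"
    unfolding Box_def using noise_intensity_box_finite[OF assms(1-5) finite_valid_labels]
    by (intro AE_all_countable[THEN iffD2] allI poisson_rm_AE_finite[OF P])
       (auto intro: box_in_sets_noise_base)
  ultimately show ?thesis
  proof eventually_elim
    case (elim \<omega>)
    have valid: "valid_label N (fst x) \<and> 0 \<le> fst (snd x) \<and> 0 \<le> snd (snd x)
                   \<and> (\<not> is_sel (fst x) \<longrightarrow> snd (snd x) \<le> 1)" if "x \<in> Pts \<omega>" for x
      using that elim(1) noise_rate_nonzero by blast
    have "finite (Pts \<omega> \<inter> {x. fst (snd x) \<le> T \<and> snd (snd x) \<le> R})" for T R :: real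
    proof (rule finite_subset[OF _ elim(2)[rule_format, of "nat \<lceil>T\<rceil>" "nat \<lceil>R\<rceil>"]])
      show "Pts \<omega> \<inter> {x. fst (snd x) \<le> T \<and> snd (snd x) \<le> R} \<subseteq> Pts \<omega> \<inter> Box (nat \<lceil>T\<rceil>) (nat \<lceil>R\<rceil>)"
        using valid unfolding Box_def by (force intro: order_trans[OF _ real_nat_ceiling_ge])
    qed
    thus ?case using valid unfolding admissible_def by blast
  qed
qed

lemma down_mutations_eq_down_box:
  assumes "admissible N P"
  shows "down_mutations P 1 = P \<inter> down_box N"
proof
  show "down_mutations P 1 \<subseteq> P \<inter> down_box N"
  proof
    fix x assume x: "x \<in> down_mutations P 1"
    obtain e t r where xe: "x = (e, t, r)" by (cases x)
    obtain i where e: "e = Down i" using x xe by (cases e) (auto simp: down_mutations_def is_down_def)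
    have "x \<in> P" "t \<le> 1" using x xe unfolding down_mutations_def by auto
    moreover have "valid_label N e" "0 \<le> t" "0 \<le> r" "\<not> is_sel e \<longrightarrow> r \<le> 1"
      using assms \<open>x \<in> P\<close> xe unfolding admissible_def by auto
    ultimately show "x \<in> P \<inter> down_box N"
      using xe e unfolding down_box_def by (auto simp: valid_label_def is_sel_def)
  qed
qed (auto simp: down_mutations_def down_box_def is_down_def)

lemma down_box_finite_intensity:
  assumes "0 \<le> q" "q \<le> 1" "0 < \<mu>" "0 < s" "0 < N"
  shows "down_box N \<in> sets (noise_intensity N \<mu> q s)" "emeasure (noise_intensity N \<mu> q s) (down_box N) < \<infinity>"
  using noise_intensity_down_box_le[OF assms] unfolding down_box_def
  by (simp_all add: box_in_sets_noise_base le_less_trans)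

lemma down_box_exp_moment:
  assumes "0 \<le> q" "q \<le> 1" "0 < \<mu>" "0 < s" "2 \<le> N"
    and P: "poisson_rm M Pts (noise_intensity N \<mu> q s)"
  shows "(\<integral>\<^sup>+\<omega>. ennreal (exp (real (card (Pts \<omega> \<inter> down_box N)) / real N)) \<partial>M) \<le> ennreal (exp (2 * \<mu>))"
proof -
  let ?\<nu> = "noise_intensity N \<mu> q s"
  have N: "0 < N" using assms(5) by simp
  have le: "emeasure ?\<nu> (down_box N) \<le> ennreal (\<mu> * real N)"
    by (rule noise_intensity_down_box_le[OF assms(1-4) N])
  note sets = down_box_finite_intensity(1)[OF assms(1-4) N]
    and fin = down_box_finite_intensity(2)[OF assms(1-4) N]
  have "measure ?\<nu> (down_box N) \<le> \<mu> * real N"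
    using enn2real_mono[OF le] assms(3) by (simp add: measure_def)
  moreover have "0 \<le> exp (1 / real N) - 1" "exp (1 / real N) - 1 \<le> 2 / real N"
    using exp_inverse_minus_one_le[OF assms(5)] by auto
  ultimately have "measure ?\<nu> (down_box N) * (exp (1 / real N) - 1) \<le> (\<mu> * real N) * (2 / real N)"
    using assms(3) by (intro mult_mono) auto
  also have "\<dots> = 2 * \<mu>" using N by simp
  finally have "ennreal (exp (measure ?\<nu> (down_box N) * (exp (1 / real N) - 1))) \<le> ennreal (exp (2 * \<mu>))"
    by (intro ennreal_leI) simp
  moreover have "(\<integral>\<^sup>+\<omega>. ennreal (exp (real (card (Pts \<omega> \<inter> down_box N)) / real N)) \<partial>M)
      = ennreal (exp (measure ?\<nu> (down_box N) * (exp (1 / real N) - 1)))"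
    using poisson_rm_exp_moment[OF P sets fin, of "1 / real N"] by simp
  ultimately show ?thesis by simp
qed

lemma moment_bound_le_constant:
  assumes "0 \<le> c" "c \<le> 2 * sqrt (v * real N ^ 3)" "0 \<le> v" "0 \<le> e" "e \<le> 1" "0 < N" "0 \<le> K"
  shows "c * e + 2 * real N * sqrt (2 * K) * sqrt e
           \<le> (2 + 2 * sqrt (2 * K)) * (sqrt (v * real N ^ 3) + real N ^ 2) * sqrt e"
proof -
  have "sqrt e * sqrt e \<le> sqrt e * 1" using assms(4,5) by (intro mult_left_mono) auto
  hence "e \<le> sqrt e" using assms(4) by simp
  hence "c * e \<le> 2 * sqrt (v * real N ^ 3) * sqrt e" using assms by (intro mult_mono) auto
  moreover have "real N \<le> real N ^ 2" using assms(6) by (simp add: power2_eq_square)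
  hence "(2 * sqrt (2 * K) * sqrt e) * real N \<le> (2 * sqrt (2 * K) * sqrt e) * real N ^ 2"
    using assms(4,7) by (intro mult_left_mono) auto
  hence "2 * real N * sqrt (2 * K) * sqrt e \<le> 2 * sqrt (2 * K) * real N ^ 2 * sqrt e"
    by (simp add: algebra_simps)
  moreover have "0 \<le> sqrt (2 * K) * sqrt (v * real N ^ 3) * sqrt e" "0 \<le> real N ^ 2 * sqrt e"
    using assms by simp_all
  ultimately show ?thesis by (simp add: algebra_simps)
qed

lemma nn_integral_spread_plus_downs_le:
  fixes M :: "'w measure" and x0 :: "nat \<Rightarrow> real"
  assumes params: "0 \<le> q" "q \<le> 1" "0 < \<mu>" "0 < s"
    and P: "poisson_rm M Pts (noise_intensity N \<mu> q s)" and N: "2 \<le> N"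
    and B: "B \<in> noise_F1 M Pts (noise_intensity N \<mu> q s)" "measure M B \<le> e" and e: "e \<le> 1"
  shows "(\<integral>\<^sup>+\<omega>. ennreal ((max_type N x0 - min_type N x0 + real (card (Pts \<omega> \<inter> down_box N))) * indicator B \<omega>) \<partial>M)
           \<le> ennreal ((2 + 2 * sqrt (2 * exp (2 * \<mu>))) * (sqrt (c2 (emp N x0) * real N ^ 3) + real N ^ 2) * sqrt e)"
proof -
  interpret prob_space M using P unfolding poisson_rm_def by blast
  have N0: "0 < N" using N by simp
  have e0: "0 \<le> e" using B(2) measure_nonneg[of M B] by linarith
  have spread: "0 \<le> max_type N x0 - min_type N x0" using min_type_le_max_type[OF N0] by simp
  have "(\<integral>\<^sup>+\<omega>. ennreal ((max_type N x0 - min_type N x0 + real (card (Pts \<omega> \<inter> down_box N))) * indicator B \<omega>) \<partial>M)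
      \<le> ennreal ((max_type N x0 - min_type N x0) * e + 2 * real N * sqrt (2 * exp (2 * \<mu>)) * sqrt e)"
  proof (rule nn_integral_indicator_le_exp_moment[OF prob_space_axioms _ B(2) _ _ N0 spread])
    show "B \<in> sets M" using B(1) noise_F1_subset_sets[OF P] by blast
    show "(\<lambda>\<omega>. card (Pts \<omega> \<inter> down_box N)) \<in> measurable M (count_space UNIV)"
      by (rule poisson_rm_card_measurable[OF P down_box_finite_intensity[OF params N0]])
  qed (use down_box_exp_moment[OF params N P] in auto)
  also have "\<dots> \<le> ennreal ((2 + 2 * sqrt (2 * exp (2 * \<mu>))) * (sqrt (c2 (emp N x0) * real N ^ 3) + real N ^ 2) * sqrt e)"
    using spread_le_c2[OF N0] spread e0 e N0
    by (intro ennreal_leI moment_bound_le_constant) (auto simp: c2_def sum_mset_emp sum_nonneg)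
  finally show ?thesis .
qed

lemma moran_displacement_bound:
  fixes M :: "'w measure" and x0 :: "nat \<Rightarrow> real"
  assumes params: "0 \<le> q" "q \<le> 1" "0 < \<mu>" "0 < s"
    and P: "poisson_rm M Pts (noise_intensity N \<mu> q s)"
    and N: "256 \<le> N" and x0: "emp N x0 \<in> Sbar N"
    and B: "B \<in> noise_F1 M Pts (noise_intensity N \<mu> q s)" "measure M B \<le> e" and e: "e \<le> 1"
  defines "bound \<equiv> (2 + 2 * sqrt (2 * exp (2 * \<mu>))) * (sqrt (c2 (emp N x0) * real N ^ 3) + real N ^ 2) * sqrt e"
  shows "(\<integral>\<^sup>+\<omega>. ennreal (- (INF t\<in>{0..1}. Min ((\<lambda>i. moran_path sel (Pts \<omega>) x0 t i - x0 i) ` {..<N}))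
                     * indicator B \<omega>) \<partial>M) \<le> ennreal bound"
    and "(\<integral>\<^sup>+\<omega>. ennreal (- (INF t\<in>{0..1}. kc (emp N (moran_path sel (Pts \<omega>) x0 t)) - kc (emp N x0))
                     * indicator B \<omega>) \<partial>M) \<le> ennreal bound"
proof -
  have N0: "0 < N" "2 \<le> N" using N by auto
  define W where "W \<omega> = max_type N x0 - min_type N x0 + real (card (Pts \<omega> \<inter> down_box N))" for \<omega>
  obtain l where lat: "\<forall>i<N. x0 i - l \<in> \<int>" using x0 mem_emp unfolding Sbar_def by force
  have "AE \<omega> in M. - (INF t\<in>{0..1}. Min ((\<lambda>i. moran_path sel (Pts \<omega>) x0 t i - x0 i) ` {..<N})) \<le> W \<omega>
              \<and> - (INF t\<in>{0..1}. kc (emp N (moran_path sel (Pts \<omega>) x0 t)) - kc (emp N x0)) \<le> W \<omega>"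
    using AE_admissible[OF params N0(1) P]
  proof eventually_elim
    case (elim \<omega>)
    have "W \<omega> = max_type N x0 - min_type N x0 + card (down_mutations (Pts \<omega>) 1)"
      unfolding W_def down_mutations_eq_down_box[OF elim] ..
    thus ?case using inf_displacement_ge[OF N elim lat, of "W \<omega>" sel] by linarith
  qed
  hence "AE \<omega> in M. ennreal (- (INF t\<in>{0..1}. Min ((\<lambda>i. moran_path sel (Pts \<omega>) x0 t i - x0 i) ` {..<N}))
                              * indicator B \<omega>) \<le> ennreal (W \<omega> * indicator B \<omega>)
             \<and> ennreal (- (INF t\<in>{0..1}. kc (emp N (moran_path sel (Pts \<omega>) x0 t)) - kc (emp N x0))
                              * indicator B \<omega>) \<le> ennreal (W \<omega> * indicator B \<omega>)"
    by eventually_elim (auto simp: indicator_def intro: ennreal_leI)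
  moreover have "(\<integral>\<^sup>+\<omega>. ennreal (W \<omega> * indicator B \<omega>) \<partial>M) \<le> ennreal bound"
    unfolding W_def bound_def by (rule nn_integral_spread_plus_downs_le[OF params P N0(2) B e])
  ultimately show "(\<integral>\<^sup>+\<omega>. ennreal (- (INF t\<in>{0..1}. Min ((\<lambda>i. moran_path sel (Pts \<omega>) x0 t i - x0 i) ` {..<N}))
                     * indicator B \<omega>) \<partial>M) \<le> ennreal bound"
    and "(\<integral>\<^sup>+\<omega>. ennreal (- (INF t\<in>{0..1}. kc (emp N (moran_path sel (Pts \<omega>) x0 t)) - kc (emp N x0))
                     * indicator B \<omega>) \<partial>M) \<le> ennreal bound"
    by (auto intro: order_trans[OF nn_integral_mono_AE] elim: eventually_mono)
qed

theorem lemma4p3: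
  fixes \<mu> :: real
  assumes "\<mu> > 0"
  shows "\<exists>C>0. \<forall>(q::real) (s::real) (M :: nat \<Rightarrow> 'w measure) Pts A B (\<epsilon> :: nat \<Rightarrow> real).
    0 \<le> q \<longrightarrow> q \<le> 1 \<longrightarrow> s > 0 \<longrightarrow>
    (\<forall>N. poisson_rm (M N) (Pts N) (noise_intensity N \<mu> q s)) \<longrightarrow>
    (\<forall>N. A N \<subseteq> Sbar N) \<longrightarrow>
    (\<forall>N. \<forall>p \<in> A N. B N p \<in> noise_F1 (M N) (Pts N) (noise_intensity N \<mu> q s) \<and>
                    measure (M N) (B N p) \<le> \<epsilon> N) \<longrightarrow>
    \<epsilon> \<longlonglongrightarrow> 0 \<longrightarrow>
    (\<exists>N0. \<forall>N \<ge> N0. \<forall>p \<in> A N. \<forall>x0. emp N x0 = p \<longrightarrow>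
       (\<forall>sel \<in> {True, False}.
          (\<integral>\<^sup>+\<omega>. ennreal (- (INF t\<in>{0..1}. Min ((\<lambda>i. moran_path sel (Pts N \<omega>) x0 t i - x0 i) ` {..<N}))
                         * indicator (B N p) \<omega>) \<partial>M N)
            \<le> ennreal (C * (sqrt (c2 p * real N ^ 3) + real N ^ 2) * sqrt (\<epsilon> N)) \<and>
          (\<integral>\<^sup>+\<omega>. ennreal (- (INF t\<in>{0..1}. kc (emp N (moran_path sel (Pts N \<omega>) x0 t)) - kc p)
                         * indicator (B N p) \<omega>) \<partial>M N)
            \<le> ennreal (C * (sqrt (c2 p * real N ^ 3) + real N ^ 2) * sqrt (\<epsilon> N))))"
  apply (intro exI[of _ "2 + 2 * sqrt (2 * exp (2 * \<mu>))"] conjI allI impI)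
   apply (simp add: add_pos_nonneg)
  subgoal premises hyps for q s M Pts A B \<epsilon>
  proof -
    obtain N1 where N1: "\<forall>n\<ge>N1. norm (\<epsilon> n - 0) < 1" using LIMSEQ_D[OF hyps(7), of 1] by auto
    \<comment> \<open>N \<ge> 256 guarantees (ln N)^2 < N, needed for k_c to be well defined\<close>
    show ?thesis
      apply (intro exI[of _ "max N1 256"] allI impI ballI)
      subgoal premises N for N p x0 sel
        using moran_displacement_bound[OF hyps(1,2) assms hyps(3) hyps(4)[rule_format, of N], of x0 "B N p" "\<epsilon> N" sel]
          hyps(5,6) N1 N unfolding N(3) by fastforce
      done
  qed
  done

end
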